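(* Let $H$ be a bialgebra, $L\in HZ^1(H)$ a 1-cocycle and $\alpha\in H'$. Then $$\phi_{L+\delta\alpha}=\phi_L\circ\theta_{\alpha\circ\phi_L},$$ where $\phi_L,\phi_{L+\delta\alpha}\colon H_R\to H$ and $\theta_{\alpha\circ\phi_L}\colon H_R\to H_R$ are defined below.
   Context: $H_R$ is the Connes–Kreimer Hopf algebra of rooted trees over a field $\mathbb K$ of characteristic zero (basis rooted forests, $B_+$ grafts a forest onto a new root, coproduct with $\Delta\circ B_+=B_+\otimes\mathbb 1+(\mathrm{id}\otimes B_+)\circ\Delta$). For an algebra $\mathcal A$ and $M\in\operatorname{End}(\mathcal A)$, $\phi_M\colon H_R\to\mathcal A$ is the unique unital algebra morphism with $\phi_M\circ B_+=M\circ\phi_M$. For a bialgebra $H$, $HZ^1(H)=\{L\in\operatorname{End}(H):\Delta\circ L=(\mathrm{id}\otimes L)\circ\Delta+L\otimes\mathbb 1\}$, $H'=\operatorname{Hom}(H,\mathbb K)$, and $\delta\alpha:=(\mathrm{id}\otimes\alpha)\circ\Delta-\mathbb 1\cdot\alpha$ for $\alpha\in H'$. For $\beta\in H_R'$, $\theta_\beta:=\phi_{B_++\delta\beta}\colon H_R\to H_R$. *)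

theory Defs
  imports Main "HOL.Vector_Spaces" "HOL-Library.Multiset" "HOL-Library.Poly_Mapping" "HOL-Library.Product_Plus"
begin

text \<open>Rooted trees are non-planar: a tree is a root with a multiset of subtrees.
  Forests are multisets of trees; they form the (monomial) basis of H_R.
  H_R is the free commutative algebra on trees, i.e. finitely supported
  K-valued functions on forests with the convolution product (multiset union
  of forests); its unit is the empty forest.\<close>

datatype rtree = Node "rtree multiset"

type_synonym forest = "rtree multiset"
type_synonym 'k HR = "forest \<Rightarrow>\<^sub>0 'k"

definition pm_scale :: "'k::comm_ring_1 \<Rightarrow> ('a \<Rightarrow>\<^sub>0 'k) \<Rightarrow> ('a \<Rightarrow>\<^sub>0 'k)" where
  "pm_scale c p = Poly_Mapping.map (\<lambda>a. c * a) p"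

definition Bplus :: "'k::comm_ring_1 HR \<Rightarrow> 'k HR" where
  "Bplus p = (\<Sum>f\<in>Poly_Mapping.keys p. Poly_Mapping.single {#Node f#} (Poly_Mapping.lookup p f))"

text \<open>H_R \<otimes> H_R is represented on its canonical basis (pairs of forests);
  the product is the convolution product for the componentwise monoid structure.\<close>
definition id_tensor_Bplus :: "(forest \<times> forest \<Rightarrow>\<^sub>0 'k::comm_ring_1) \<Rightarrow> (forest \<times> forest \<Rightarrow>\<^sub>0 'k)" where
  "id_tensor_Bplus t = (\<Sum>ab\<in>Poly_Mapping.keys t. Poly_Mapping.single (fst ab, {#Node (snd ab)#}) (Poly_Mapping.lookup t ab))"

text \<open>Coproduct on trees, determined by  Delta o B_+ = B_+ (x) 1 + (id (x) B_+) o Delta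
  and multiplicativity.\<close>
primrec DeltaT :: "rtree \<Rightarrow> (forest \<times> forest \<Rightarrow>\<^sub>0 'k::comm_ring_1)" where
  "DeltaT (Node ts) = Poly_Mapping.single ({#Node ts#}, {#}) 1
       + id_tensor_Bplus (prod_mset (image_mset DeltaT ts))"

definition DeltaR :: "'k::comm_ring_1 HR \<Rightarrow> (forest \<times> forest \<Rightarrow>\<^sub>0 'k)" where
  "DeltaR p = (\<Sum>f\<in>Poly_Mapping.keys p. pm_scale (Poly_Mapping.lookup p f) (prod_mset (image_mset DeltaT f)))"

text \<open>delta beta := (id (x) beta) o Delta - 1 . beta  on H_R.\<close>
definition deltaR :: "('k::comm_ring_1 HR \<Rightarrow> 'k) \<Rightarrow> 'k HR \<Rightarrow> 'k HR" where
  "deltaR \<beta> p = (\<Sum>ab\<in>Poly_Mapping.keys (DeltaR p).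
        Poly_Mapping.single (fst ab) (Poly_Mapping.lookup (DeltaR p) ab * \<beta> (Poly_Mapping.single (snd ab) 1)))
     - Poly_Mapping.single {#} (\<beta> p)"

text \<open>A commutative K-algebra A is given as a type of class comm_ring_1 together
  with a scalar multiplication scale. phi is a unital algebra morphism H_R -> A
  with phi o B_+ = M o phi.\<close>
definition is_phi :: "('k::comm_ring_1 \<Rightarrow> 'a::comm_ring_1 \<Rightarrow> 'a) \<Rightarrow> ('a \<Rightarrow> 'a) \<Rightarrow> ('k HR \<Rightarrow> 'a) \<Rightarrow> bool" where
  "is_phi scale M \<phi> \<longleftrightarrow>
     (\<forall>p q. \<phi> (p + q) = \<phi> p + \<phi> q) \<and>
     (\<forall>c p. \<phi> (pm_scale c p) = scale c (\<phi> p)) \<and>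
     \<phi> 1 = 1 \<and>
     (\<forall>p q. \<phi> (p * q) = \<phi> p * \<phi> q) \<and>
     (\<forall>p. \<phi> (Bplus p) = M (\<phi> p))"

definition phiM :: "('k::comm_ring_1 \<Rightarrow> 'a::comm_ring_1 \<Rightarrow> 'a) \<Rightarrow> ('a \<Rightarrow> 'a) \<Rightarrow> 'k HR \<Rightarrow> 'a" where
  "phiM scale M = (THE \<phi>. is_phi scale M \<phi>)"

definition theta :: "('k::comm_ring_1 HR \<Rightarrow> 'k) \<Rightarrow> 'k HR \<Rightarrow> 'k HR" where
  "theta \<beta> = phiM pm_scale (\<lambda>p. Bplus p + deltaR \<beta> p)"

text \<open>H^{(x)n} is the free K-vector space on n-tuples (lists of length n) of
  elements of H, modulo the subspace spanned by the multilinearity relations.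
  A tensor is represented by an element of the free space; teq is equality
  in the quotient.\<close>

inductive_set tensor_rels :: "('k::field \<Rightarrow> 'h::ab_group_add \<Rightarrow> 'h) \<Rightarrow> ('h list \<Rightarrow>\<^sub>0 'k) set"
  for scale where
  zero: "0 \<in> tensor_rels scale"
| add: "t \<in> tensor_rels scale \<Longrightarrow> s \<in> tensor_rels scale \<Longrightarrow> t + s \<in> tensor_rels scale"
| smult: "t \<in> tensor_rels scale \<Longrightarrow> pm_scale c t \<in> tensor_rels scale"
| additive: "Poly_Mapping.single (p @ (x + y) # q) 1 - Poly_Mapping.single (p @ x # q) 1
              - Poly_Mapping.single (p @ y # q) 1 \<in> tensor_rels scale"
| homog: "Poly_Mapping.single (p @ scale c x # q) 1 - Poly_Mapping.single (p @ x # q) c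
              \<in> tensor_rels scale"

definition teq :: "('k::field \<Rightarrow> 'h::ab_group_add \<Rightarrow> 'h) \<Rightarrow> ('h list \<Rightarrow>\<^sub>0 'k) \<Rightarrow> ('h list \<Rightarrow>\<^sub>0 'k) \<Rightarrow> bool" where
  "teq scale t s \<longleftrightarrow> t - s \<in> tensor_rels scale"

text \<open>The pure tensor x (as an element of H^{(x)1} = H).\<close>
definition pure :: "'h \<Rightarrow> ('h list \<Rightarrow>\<^sub>0 'k::comm_ring_1)" where
  "pure x = Poly_Mapping.single [x] 1"

definition tcat :: "('h list \<Rightarrow>\<^sub>0 'k::comm_ring_1) \<Rightarrow> ('h list \<Rightarrow>\<^sub>0 'k) \<Rightarrow> ('h list \<Rightarrow>\<^sub>0 'k)" where
  "tcat t s = (\<Sum>xs\<in>Poly_Mapping.keys t. \<Sum>ys\<in>Poly_Mapping.keys s. Poly_Mapping.single (xs @ ys) (Poly_Mapping.lookup t xs * Poly_Mapping.lookup s ys))"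

definition tmult :: "('h::times list \<Rightarrow>\<^sub>0 'k::comm_ring_1) \<Rightarrow> ('h list \<Rightarrow>\<^sub>0 'k) \<Rightarrow> ('h list \<Rightarrow>\<^sub>0 'k)" where
  "tmult t s = (\<Sum>xs\<in>Poly_Mapping.keys t. \<Sum>ys\<in>Poly_Mapping.keys s.
       Poly_Mapping.single (map2 (*) xs ys) (Poly_Mapping.lookup t xs * Poly_Mapping.lookup s ys))"

text \<open>f_1 (x) ... (x) f_n applied to a tensor, where each f_i : H -> H^{(x)k_i}
  (e.g. pure = id, Delta, or a functional landing in H^{(x)0} = K).\<close>
definition tapply :: "('h \<Rightarrow> ('h list \<Rightarrow>\<^sub>0 'k::comm_ring_1)) list \<Rightarrow> ('h list \<Rightarrow>\<^sub>0 'k) \<Rightarrow> ('h list \<Rightarrow>\<^sub>0 'k)" where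
  "tapply fs t = (\<Sum>xs\<in>Poly_Mapping.keys t. pm_scale (Poly_Mapping.lookup t xs)
       (foldr tcat (map2 (\<lambda>f x. f x) fs xs) (Poly_Mapping.single [] 1)))"

text \<open>A (commutative) K-bialgebra on the comm. ring 'h with scalar multiplication
  scale, coproduct Delta (each Delta x a representative of an element of H (x) H)
  and counit eps.\<close>
definition bialgebra :: "('k::field \<Rightarrow> 'h::comm_ring_1 \<Rightarrow> 'h) \<Rightarrow> ('h \<Rightarrow> ('h list \<Rightarrow>\<^sub>0 'k)) \<Rightarrow> ('h \<Rightarrow> 'k) \<Rightarrow> bool" where
  "bialgebra scale \<Delta> \<epsilon> \<longleftrightarrow>
     vector_space scale \<and>
     (\<forall>c x y. scale c (x * y) = scale c x * y) \<and>
     (\<forall>x. Poly_Mapping.keys (\<Delta> x) \<subseteq> {xs. length xs = 2}) \<and>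
     (\<forall>x y. teq scale (\<Delta> (x + y)) (\<Delta> x + \<Delta> y)) \<and>
     (\<forall>c x. teq scale (\<Delta> (scale c x)) (pm_scale c (\<Delta> x))) \<and>
     (\<forall>x. teq scale (tapply [\<Delta>, pure] (\<Delta> x)) (tapply [pure, \<Delta>] (\<Delta> x))) \<and>
     (\<forall>x y. \<epsilon> (x + y) = \<epsilon> x + \<epsilon> y) \<and>
     (\<forall>c x. \<epsilon> (scale c x) = c * \<epsilon> x) \<and>
     (\<forall>x. teq scale (tapply [\<lambda>a. Poly_Mapping.single [] (\<epsilon> a), pure] (\<Delta> x)) (pure x)) \<and>
     (\<forall>x. teq scale (tapply [pure, \<lambda>a. Poly_Mapping.single [] (\<epsilon> a)] (\<Delta> x)) (pure x)) \<and>
     (\<forall>x y. teq scale (\<Delta> (x * y)) (tmult (\<Delta> x) (\<Delta> y))) \<and>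
     teq scale (\<Delta> 1) (Poly_Mapping.single [1, 1] 1) \<and>
     (\<forall>x y. \<epsilon> (x * y) = \<epsilon> x * \<epsilon> y) \<and>
     \<epsilon> 1 = 1"

definition linear_map :: "('k::field \<Rightarrow> 'h::ab_group_add \<Rightarrow> 'h) \<Rightarrow> ('h \<Rightarrow> 'h) \<Rightarrow> bool" where
  "linear_map scale L \<longleftrightarrow> (\<forall>x y. L (x + y) = L x + L y) \<and> (\<forall>c x. L (scale c x) = scale c (L x))"

definition dual_space :: "('k::field \<Rightarrow> 'h::ab_group_add \<Rightarrow> 'h) \<Rightarrow> ('h \<Rightarrow> 'k) set" where
  "dual_space scale = {\<alpha>. (\<forall>x y. \<alpha> (x + y) = \<alpha> x + \<alpha> y) \<and> (\<forall>c x. \<alpha> (scale c x) = c * \<alpha> x)}"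

text \<open>HZ^1(H) = {L in End(H). Delta o L = (id (x) L) o Delta + L (x) 1}.\<close>
definition HZ1 :: "('k::field \<Rightarrow> 'h::comm_ring_1 \<Rightarrow> 'h) \<Rightarrow> ('h \<Rightarrow> ('h list \<Rightarrow>\<^sub>0 'k)) \<Rightarrow> ('h \<Rightarrow> 'h) set" where
  "HZ1 scale \<Delta> = {L. linear_map scale L \<and>
     (\<forall>x. teq scale (\<Delta> (L x))
            (tapply [pure, \<lambda>a. pure (L a)] (\<Delta> x) + Poly_Mapping.single [L x, 1] 1))}"

text \<open>delta alpha := (id (x) alpha) o Delta - 1 . alpha  (an element of End(H)).\<close>
definition delta_dual :: "('k::field \<Rightarrow> 'h::comm_ring_1 \<Rightarrow> 'h) \<Rightarrow> ('h \<Rightarrow> ('h list \<Rightarrow>\<^sub>0 'k)) \<Rightarrow> ('h \<Rightarrow> 'k) \<Rightarrow> 'h \<Rightarrow> 'h" where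
  "delta_dual scale \<Delta> \<alpha> x =
     (\<Sum>xs\<in>Poly_Mapping.keys (\<Delta> x). scale (Poly_Mapping.lookup (\<Delta> x) xs * \<alpha> (xs ! 1)) (xs ! 0)) - scale (\<alpha> x) 1"

end

theory Submission
  imports Defs
begin

(* Both sides are unital algebra morphisms H_R -> H, so by the universal property of
   (H_R, B_+) it suffices that the right-hand side intertwines B_+ with L + delta alpha.
   Writing phi = phi_L and beta = alpha o phi, theta_beta intertwines B_+ with
   B_+ + delta beta, so everything reduces to  phi o delta beta = delta alpha o phi.
   That identity holds because phi is a coalgebra morphism: Delta o phi = (phi (x) phi) o Delta,
   proved by induction on trees using the cocycle property of L for grafting and the
   multiplicativity of both coproducts for forests.  Tensors in H (x) H are only given
   modulo the multilinearity relations, so the coalgebra property is stated by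
   contracting both sides against an arbitrary bilinear map B : H x H -> H; varying B
   is what makes the induction go through. *)


definition lin_ext :: "('a \<Rightarrow> 'k::zero \<Rightarrow> 'c::comm_monoid_add) \<Rightarrow> ('a \<Rightarrow>\<^sub>0 'k) \<Rightarrow> 'c" where
  "lin_ext h t = (\<Sum>k\<in>Poly_Mapping.keys t. h k (Poly_Mapping.lookup t k))"

definition coeff_additive :: "('a \<Rightarrow> 'k::plus \<Rightarrow> 'c::plus) \<Rightarrow> bool" where
  "coeff_additive h \<longleftrightarrow> (\<forall>k a b. h k (a + b) = h k a + h k b)"

lemma coeff_additive_zero:
  fixes h :: "'a \<Rightarrow> 'k::comm_monoid_add \<Rightarrow> 'c::cancel_comm_monoid_add"
  assumes "coeff_additive h" shows "h k 0 = 0"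
  using assms[unfolded coeff_additive_def, rule_format, of k 0 0] by simp

lemma lin_ext_zero [simp]: "lin_ext h 0 = 0"
  by (simp add: lin_ext_def)

lemma lin_ext_single:
  fixes h :: "'a \<Rightarrow> 'k::comm_monoid_add \<Rightarrow> 'c::cancel_comm_monoid_add"
  assumes "coeff_additive h" shows "lin_ext h (Poly_Mapping.single k c) = h k c"
  using coeff_additive_zero[OF assms] by (cases "c = 0") (auto simp: lin_ext_def)

lemma lin_ext_add:
  fixes h :: "'a \<Rightarrow> 'k::comm_monoid_add \<Rightarrow> 'c::cancel_comm_monoid_add"
  assumes "coeff_additive h" shows "lin_ext h (t + s) = lin_ext h t + lin_ext h s"
  unfolding lin_ext_def using assms coeff_additive_zero[OF assms]
  by (intro setsum_keys_plus_distrib) (auto simp: coeff_additive_def)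

lemma lin_ext_sum:
  fixes h :: "'a \<Rightarrow> 'k::comm_monoid_add \<Rightarrow> 'c::cancel_comm_monoid_add"
  assumes "coeff_additive h" shows "lin_ext h (\<Sum>i\<in>I. t i) = (\<Sum>i\<in>I. lin_ext h (t i))"
  by (induction I rule: infinite_finite_induct) (auto simp: lin_ext_add[OF assms])

lemma lin_ext_diff:
  fixes h :: "'a \<Rightarrow> 'k::ab_group_add \<Rightarrow> 'c::ab_group_add"
  assumes "coeff_additive h" shows "lin_ext h (t - s) = lin_ext h t - lin_ext h s"
  using lin_ext_add[OF assms, of "t - s" s] by (simp add: algebra_simps)

lemma poly_mapping_monomials:
  "t = (\<Sum>k\<in>Poly_Mapping.keys t. Poly_Mapping.single k (Poly_Mapping.lookup t k))"
  by (rule poly_mapping_eqI) (simp add: lookup_sum lookup_single when_def in_keys_iff)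

lemma lookup_pm_scale [simp]: "Poly_Mapping.lookup (pm_scale c p) k = c * Poly_Mapping.lookup p k"
  by (simp add: pm_scale_def map.rep_eq when_def)

lemma pm_scale_single: "pm_scale c (Poly_Mapping.single k a) = Poly_Mapping.single k (c * a)"
  by (simp add: pm_scale_def)

lemma pm_scale_conv_mult: "pm_scale c p = Poly_Mapping.single 0 c * p"
  by (simp add: pm_scale_def mult_map_scale_conv_mult)

lemma lin_ext_pm_scale:
  fixes h :: "'a \<Rightarrow> 'k::comm_ring_1 \<Rightarrow> 'c::cancel_comm_monoid_add"
  assumes "coeff_additive h"
  shows "lin_ext h (pm_scale c t) = (\<Sum>k\<in>Poly_Mapping.keys t. h k (c * Poly_Mapping.lookup t k))"
  unfolding lin_ext_def using coeff_additive_zero[OF assms]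
  by (intro sum.mono_neutral_cong_left) (auto simp: in_keys_iff)

lemma times_poly_mapping_expand:
  "(p::('a::comm_monoid_add \<Rightarrow>\<^sub>0 'k::comm_ring_1)) * q =
   (\<Sum>f\<in>Poly_Mapping.keys p. \<Sum>g\<in>Poly_Mapping.keys q.
      Poly_Mapping.single (f + g) (Poly_Mapping.lookup p f * Poly_Mapping.lookup q g))"
  by (subst poly_mapping_monomials[of p], subst poly_mapping_monomials[of q])
    (simp add: sum_product mult_single)

locale scalar_algebra = module sc
  for sc :: "'k::comm_ring_1 \<Rightarrow> 'a::comm_ring_1 \<Rightarrow> 'a" +
  assumes scale_mult_left: "sc c (x * y) = sc c x * y"
begin

lemma scale_mult_right: "sc c (x * y) = x * sc c y"
  using scale_mult_left[of c y x] by (simp add: mult.commute)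

lemma scale_times_scale: "sc a x * sc b y = sc (a * b) (x * y)"
  by (simp add: scale_mult_left[symmetric] scale_mult_right[symmetric] mult.commute)

lemma coeff_additive_scale: "coeff_additive (\<lambda>k c. sc c (g k))"
  by (simp add: coeff_additive_def scale_left_distrib)

lemma lin_ext_scale_homog:
  assumes "coeff_additive h" "\<And>k a. h k (c * a) = sc c (h k a)"
  shows "lin_ext h (pm_scale c t) = sc c (lin_ext h t)"
  unfolding lin_ext_pm_scale[OF assms(1)] by (simp add: lin_ext_def scale_sum_right assms(2))

end

interpretation pm: scalar_algebra "pm_scale :: 'k::comm_ring_1 \<Rightarrow> ('a::comm_monoid_add \<Rightarrow>\<^sub>0 'k) \<Rightarrow> _"
  by unfold_locales
    (simp_all add: pm_scale_conv_mult single_add distrib_left distrib_right mult.assoc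
      flip: mult_single[of 0 _ 0, simplified])

section \<open>The universal property of (H_R, B_+)\<close>

primrec phiT :: "('a::comm_ring_1 \<Rightarrow> 'a) \<Rightarrow> rtree \<Rightarrow> 'a" where
  "phiT M (Node ts) = M (prod_mset (image_mset (phiT M) ts))"

definition phiF :: "('a::comm_ring_1 \<Rightarrow> 'a) \<Rightarrow> forest \<Rightarrow> 'a" where
  "phiF M f = prod_mset (image_mset (phiT M) f)"

lemma phiF_empty [simp]: "phiF M {#} = 1"
  by (simp add: phiF_def)

lemma phiF_add_mset: "phiF M (add_mset t f) = phiT M t * phiF M f"
  by (simp add: phiF_def)

lemma phiF_union: "phiF M (f + g) = phiF M f * phiF M g"
  by (simp add: phiF_def)

lemma phiF_Node: "phiF M {#Node f#} = M (phiF M f)"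
  by (simp add: phiF_def)

lemma Bplus_single: "Bplus (Poly_Mapping.single f (1::'k::comm_ring_1)) = Poly_Mapping.single {#Node f#} 1"
  by (simp add: Bplus_def)

lemma single_add_mset:
  "Poly_Mapping.single (add_mset t f) (1::'k::comm_ring_1) = Poly_Mapping.single {#t#} 1 * Poly_Mapping.single f 1"
  by (simp add: mult_single)

lemma is_phiD:
  assumes "is_phi sc M \<phi>"
  shows "\<phi> (p + q) = \<phi> p + \<phi> q" "\<phi> (pm_scale c p) = sc c (\<phi> p)" "\<phi> 1 = 1"
    and "\<phi> (p * q) = \<phi> p * \<phi> q" "\<phi> (Bplus p) = M (\<phi> p)"
  using assms unfolding is_phi_def by blast+

context scalar_algebra
begin

definition phi_explicit :: "('a \<Rightarrow> 'a) \<Rightarrow> 'k HR \<Rightarrow> 'a" where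
  "phi_explicit M = lin_ext (\<lambda>f c. sc c (phiF M f))"

lemma phi_explicit_single: "phi_explicit M (Poly_Mapping.single f c) = sc c (phiF M f)"
  unfolding phi_explicit_def by (rule lin_ext_single[OF coeff_additive_scale])

lemma phi_explicit_sum: "phi_explicit M (\<Sum>i\<in>I. t i) = (\<Sum>i\<in>I. phi_explicit M (t i))"
  unfolding phi_explicit_def by (rule lin_ext_sum[OF coeff_additive_scale])

lemma is_phi_phi_explicit:
  assumes M: "module_hom sc sc M"
  shows "is_phi sc M (phi_explicit M)"
proof -
  let ?\<phi> = "phi_explicit M"
  have add: "?\<phi> (p + q) = ?\<phi> p + ?\<phi> q" for p q
    unfolding phi_explicit_def by (rule lin_ext_add[OF coeff_additive_scale])
  have scale: "?\<phi> (pm_scale c p) = sc c (?\<phi> p)" for c p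
    unfolding phi_explicit_def by (rule lin_ext_scale_homog[OF coeff_additive_scale]) simp
  have one: "?\<phi> 1 = 1"
    using phi_explicit_single[of M 0 1] by simp
  have mult: "?\<phi> (p * q) = ?\<phi> p * ?\<phi> q" for p q
  proof -
    have "?\<phi> (p * q) = (\<Sum>f\<in>Poly_Mapping.keys p. \<Sum>g\<in>Poly_Mapping.keys q.
        sc (Poly_Mapping.lookup p f) (phiF M f) * sc (Poly_Mapping.lookup q g) (phiF M g))"
      by (simp add: times_poly_mapping_expand phi_explicit_sum phi_explicit_single
          scale_times_scale phiF_union)
    also have "\<dots> = ?\<phi> p * ?\<phi> q"
      by (simp add: phi_explicit_def lin_ext_def sum_product)
    finally show ?thesis .
  qed
  have Bplus: "?\<phi> (Bplus p) = M (?\<phi> p)" for p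
  proof -
    have "?\<phi> (Bplus p) = (\<Sum>f\<in>Poly_Mapping.keys p. sc (Poly_Mapping.lookup p f) (M (phiF M f)))"
      by (simp add: Bplus_def phi_explicit_sum phi_explicit_single phiF_Node)
    also have "\<dots> = M (?\<phi> p)"
      by (simp add: phi_explicit_def lin_ext_def module_hom.sum[OF M] module_hom.scale[OF M])
    finally show ?thesis .
  qed
  show ?thesis
    unfolding is_phi_def using add scale one mult Bplus by blast
qed

lemma is_phi_module_hom: "is_phi sc M \<phi> \<Longrightarrow> module_hom pm_scale sc \<phi>"
  unfolding module_hom_iff
  using pm.module_axioms module_axioms by (auto dest: is_phiD)

text \<open>Uniqueness: a unital algebra morphism intertwining B_+ and M is determined on
  trees by induction, hence on forests by multiplicativity, hence everywhere by linearity.\<close>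
lemma is_phi_unique:
  assumes \<phi>: "is_phi sc M \<phi>"
  shows "\<phi> = phi_explicit M"
proof
  fix p
  note \<phi>_props = is_phiD[OF \<phi>]
  note \<phi>_sum = module_hom.sum[OF is_phi_module_hom[OF \<phi>]]
  have forest: "\<phi> (Poly_Mapping.single f 1) = phiF M f"
    if trees: "\<forall>t\<in>#f. \<phi> (Poly_Mapping.single {#t#} 1) = phiT M t" for f
    using trees
  proof (induction f)
    case (add t f)
    then show ?case
      by (subst single_add_mset) (simp add: \<phi>_props phiF_add_mset)
  qed (simp add: \<phi>_props)
  have tree: "\<phi> (Poly_Mapping.single {#t#} 1) = phiT M t" for t
  proof (induction t)
    case (Node ts)
    then have "\<phi> (Poly_Mapping.single ts 1) = phiF M ts"
      by (intro forest) simp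
    then show ?case
      by (simp add: Bplus_single[symmetric] \<phi>_props phiF_def)
  qed
  have "\<phi> p = (\<Sum>f\<in>Poly_Mapping.keys p. \<phi> (pm_scale (Poly_Mapping.lookup p f) (Poly_Mapping.single f 1)))"
    by (subst poly_mapping_monomials) (simp add: \<phi>_sum pm_scale_single)
  also have "\<dots> = phi_explicit M p"
    by (simp add: \<phi>_props forest tree phi_explicit_def lin_ext_def)
  finally show "\<phi> p = phi_explicit M p" .
qed

lemma phiM_eqI:
  assumes "is_phi sc M \<phi>" shows "phiM sc M = \<phi>"
  unfolding phiM_def
proof (rule the_equality)
  show "\<And>\<psi>. is_phi sc M \<psi> \<Longrightarrow> \<psi> = \<phi>"
    using is_phi_unique assms by metis
qed (fact assms)

lemma is_phi_phiM: "module_hom sc sc M \<Longrightarrow> is_phi sc M (phiM sc M)"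
  using is_phi_phi_explicit phiM_eqI by metis

lemma is_phi_single: "is_phi sc M \<phi> \<Longrightarrow> \<phi> (Poly_Mapping.single f c) = sc c (phiF M f)"
  using is_phi_unique phi_explicit_single by metis

lemma is_phi_comp:
  assumes \<theta>: "is_phi pm_scale N \<theta>" and \<phi>: "is_phi sc M \<phi>"
    and intertwine: "\<And>p. \<phi> (N p) = M' (\<phi> p)"
  shows "is_phi sc M' (\<phi> \<circ> \<theta>)"
  using is_phiD[OF \<theta>] is_phiD[OF \<phi>] intertwine by (simp add: is_phi_def)

end

text \<open>B_+ + delta beta is linear, so theta_beta is a genuine phi; linearity of delta beta
  rests on that of Delta_R and beta.\<close>
lemma Bplus_module_hom: "module_hom pm_scale pm_scale (Bplus :: 'k::comm_ring_1 HR \<Rightarrow> _)"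
proof -
  let ?h = "\<lambda>f c. Poly_Mapping.single {#Node f#} (c::'k)"
  have h: "coeff_additive ?h"
    by (simp add: coeff_additive_def single_add)
  have eq: "Bplus = lin_ext ?h"
    by (simp add: fun_eq_iff Bplus_def lin_ext_def)
  show ?thesis
    unfolding module_hom_iff eq
    by (simp add: pm.module_axioms lin_ext_add[OF h] pm.lin_ext_scale_homog[OF h] pm_scale_single)
qed

lemma DeltaR_module_hom: "module_hom pm_scale pm_scale (DeltaR :: 'k::comm_ring_1 HR \<Rightarrow> _)"
proof -
  let ?h = "\<lambda>f c. pm_scale c (prod_mset (image_mset DeltaT f) :: forest \<times> forest \<Rightarrow>\<^sub>0 'k)"
  have h: "coeff_additive ?h"
    by (simp add: coeff_additive_def pm.scale_left_distrib)
  have eq: "DeltaR = lin_ext ?h"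
    by (simp add: fun_eq_iff DeltaR_def lin_ext_def)
  show ?thesis
    unfolding module_hom_iff eq
    by (simp add: pm.module_axioms lin_ext_add[OF h] pm.lin_ext_scale_homog[OF h])
qed

lemma deltaR_module_hom:
  fixes \<beta> :: "'k::comm_ring_1 HR \<Rightarrow> 'k"
  assumes \<beta>_add: "\<And>p q. \<beta> (p + q) = \<beta> p + \<beta> q"
    and \<beta>_scale: "\<And>c p. \<beta> (pm_scale c p) = c * \<beta> p"
  shows "module_hom pm_scale pm_scale (deltaR \<beta>)"
proof -
  interpret \<Delta>: module_hom pm_scale pm_scale "DeltaR :: 'k HR \<Rightarrow> _"
    by (rule DeltaR_module_hom)
  let ?h = "\<lambda>ab c. Poly_Mapping.single (fst ab) (c * \<beta> (Poly_Mapping.single (snd ab) 1)) :: 'k HR"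
  have h: "coeff_additive ?h"
    by (simp add: coeff_additive_def distrib_right single_add)
  have h_scale: "lin_ext ?h (pm_scale c t) = pm_scale c (lin_ext ?h t)" for c t
    by (rule pm.lin_ext_scale_homog[OF h]) (simp add: pm_scale_single mult.assoc)
  have \<delta>: "deltaR \<beta> p = lin_ext ?h (DeltaR p) - Poly_Mapping.single {#} (\<beta> p)" for p
    by (simp add: deltaR_def lin_ext_def)
  show ?thesis
    unfolding module_hom_iff \<delta>
    by (simp add: pm.module_axioms \<Delta>.add \<Delta>.scale lin_ext_add[OF h] h_scale \<beta>_add \<beta>_scale
        single_add pm.scale_right_diff_distrib pm_scale_single)
qed

section \<open>Contracting 2-tensors with bilinear maps\<close>

lemma length_2_cases: "length xs = 2 \<Longrightarrow> \<exists>a b. xs = [a, b]"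
  by (cases xs; cases "tl xs") auto

lemma length_append_Cons_eq_2:
  "length (p @ z # q) = 2 \<longleftrightarrow> (p = [] \<and> length q = 1) \<or> (length p = 1 \<and> q = [])"
  by (cases p) auto

text \<open>Over a field, a bilinear map B on H is a well-defined function on H (x) H; it is applied
  to a representative 2-tensor by contracting every basis tensor [x, y] to B x y.\<close>
locale field_scalar_algebra = scalar_algebra sc
  for sc :: "'k::field \<Rightarrow> 'a::comm_ring_1 \<Rightarrow> 'a"
begin

definition bilinear_map :: "('a \<Rightarrow> 'a \<Rightarrow> 'a) \<Rightarrow> bool" where
  "bilinear_map B \<longleftrightarrow>
     (\<forall>x y z. B (x + y) z = B x z + B y z) \<and> (\<forall>x y z. B z (x + y) = B z x + B z y) \<and>
     (\<forall>c x z. B (sc c x) z = sc c (B x z)) \<and> (\<forall>c x z. B z (sc c x) = sc c (B z x))"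

definition contract :: "('a \<Rightarrow> 'a \<Rightarrow> 'a) \<Rightarrow> ('a list \<Rightarrow>\<^sub>0 'k) \<Rightarrow> 'a" where
  "contract B = lin_ext (\<lambda>xs c. if length xs = 2 then sc c (B (xs!0) (xs!1)) else 0)"

lemma coeff_additive_contract:
  "coeff_additive (\<lambda>xs c. if length xs = 2 then sc c (B (xs!0) (xs!1)) else 0)"
  by (simp add: coeff_additive_def scale_left_distrib)

lemma contract_zero [simp]: "contract B 0 = 0"
  by (simp add: contract_def)

lemma contract_add: "contract B (t + s) = contract B t + contract B s"
  unfolding contract_def by (rule lin_ext_add[OF coeff_additive_contract])

lemma contract_diff: "contract B (t - s) = contract B t - contract B s"
  unfolding contract_def by (rule lin_ext_diff[OF coeff_additive_contract])

lemma contract_sum: "contract B (\<Sum>i\<in>I. t i) = (\<Sum>i\<in>I. contract B (t i))"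
  unfolding contract_def by (rule lin_ext_sum[OF coeff_additive_contract])

lemma contract_single:
  "contract B (Poly_Mapping.single xs c) = (if length xs = 2 then sc c (B (xs!0) (xs!1)) else 0)"
  unfolding contract_def by (rule lin_ext_single[OF coeff_additive_contract])

lemma contract_pm_scale: "contract B (pm_scale c t) = sc c (contract B t)"
  unfolding contract_def by (rule lin_ext_scale_homog[OF coeff_additive_contract]) simp

lemma contract_tensor_rels:
  assumes B: "bilinear_map B" and "t \<in> tensor_rels sc"
  shows "contract B t = 0"
  using assms(2)
proof induction
  case (additive p x y q)
  show ?case using B length_append_Cons_eq_2[of p _ q]
    by (auto simp: contract_diff contract_single scale_right_distrib bilinear_map_def
        length_Suc_conv nth_append)
next
  case (homog p c x q)
  show ?case using B length_append_Cons_eq_2[of p _ q]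
    by (auto simp: contract_diff contract_single bilinear_map_def length_Suc_conv nth_append)
qed (simp_all add: contract_add contract_pm_scale)

lemma contract_teq: "bilinear_map B \<Longrightarrow> teq sc t s \<Longrightarrow> contract B t = contract B s"
  using contract_tensor_rels[of B "t - s"] by (simp add: teq_def contract_diff)

end

section \<open>phi_L is a coalgebra morphism\<close>

locale cocycle_bialgebra =
  fixes sc :: "'k::field \<Rightarrow> 'h::comm_ring_1 \<Rightarrow> 'h"
    and \<Delta> :: "'h \<Rightarrow> ('h list \<Rightarrow>\<^sub>0 'k)"
    and \<epsilon> :: "'h \<Rightarrow> 'k"
    and L :: "'h \<Rightarrow> 'h"
  assumes bialgebra: "bialgebra sc \<Delta> \<epsilon>" and cocycle: "L \<in> HZ1 sc \<Delta>"
begin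

sublocale field_scalar_algebra sc
  using bialgebra unfolding bialgebra_def vector_space_def by unfold_locales auto

lemma Delta_length: "xs \<in> Poly_Mapping.keys (\<Delta> x) \<Longrightarrow> length xs = 2"
  using bialgebra unfolding bialgebra_def by blast

lemma Delta_add: "teq sc (\<Delta> (x + y)) (\<Delta> x + \<Delta> y)"
  and Delta_scale: "teq sc (\<Delta> (sc c x)) (pm_scale c (\<Delta> x))"
  and Delta_mult: "teq sc (\<Delta> (x * y)) (tmult (\<Delta> x) (\<Delta> y))"
  and Delta_one: "teq sc (\<Delta> 1) (Poly_Mapping.single [1, 1] 1)"
  using bialgebra unfolding bialgebra_def by blast+

lemma L_module_hom: "module_hom sc sc L"
  using cocycle module_axioms unfolding HZ1_def linear_map_def module_hom_iff by blast

lemma L_cocycle: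
  "teq sc (\<Delta> (L x)) (tapply [pure, \<lambda>a. pure (L a)] (\<Delta> x) + Poly_Mapping.single [L x, 1] 1)"
  using cocycle unfolding HZ1_def by blast

lemma contract_Delta:
  "contract B (\<Delta> x) = (\<Sum>xs\<in>Poly_Mapping.keys (\<Delta> x). sc (Poly_Mapping.lookup (\<Delta> x) xs) (B (xs!0) (xs!1)))"
  unfolding contract_def lin_ext_def by (intro sum.cong) (auto dest: Delta_length)

lemma contract_Delta_module_hom:
  assumes "bilinear_map B" shows "module_hom sc sc (\<lambda>x. contract B (\<Delta> x))"
  using contract_teq[OF assms Delta_add] contract_teq[OF assms Delta_scale] module_axioms
  by (simp add: module_hom_iff contract_add contract_pm_scale)

lemma contract_tmult:
  "contract B (tmult (\<Delta> x) (\<Delta> y)) = (\<Sum>xs\<in>Poly_Mapping.keys (\<Delta> x). \<Sum>ys\<in>Poly_Mapping.keys (\<Delta> y).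
      sc (Poly_Mapping.lookup (\<Delta> x) xs * Poly_Mapping.lookup (\<Delta> y) ys) (B (xs!0 * ys!0) (xs!1 * ys!1)))"
  unfolding tmult_def contract_sum contract_single
  by (intro sum.cong refl) (auto dest!: Delta_length length_2_cases)

lemma contract_tapply_L:
  "contract B (tapply [pure, \<lambda>a. pure (L a)] (\<Delta> x)) = contract (\<lambda>a b. B a (L b)) (\<Delta> x)"
  unfolding tapply_def contract_sum contract_pm_scale contract_Delta
  by (intro sum.cong refl)
    (auto dest!: Delta_length length_2_cases simp: pure_def tcat_def contract_single)

text \<open>Contraction of (phi_L (x) phi_L) w with B, for w in H_R (x) H_R.\<close>
definition phi_contract :: "('h \<Rightarrow> 'h \<Rightarrow> 'h) \<Rightarrow> (forest \<times> forest \<Rightarrow>\<^sub>0 'k) \<Rightarrow> 'h" where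
  "phi_contract B = lin_ext (\<lambda>ab c. sc c (B (phiF L (fst ab)) (phiF L (snd ab))))"

lemma phi_contract_add: "phi_contract B (t + s) = phi_contract B t + phi_contract B s"
  unfolding phi_contract_def by (rule lin_ext_add[OF coeff_additive_scale])

lemma phi_contract_sum: "phi_contract B (\<Sum>i\<in>I. t i) = (\<Sum>i\<in>I. phi_contract B (t i))"
  unfolding phi_contract_def by (rule lin_ext_sum[OF coeff_additive_scale])

lemma phi_contract_single:
  "phi_contract B (Poly_Mapping.single ab c) = sc c (B (phiF L (fst ab)) (phiF L (snd ab)))"
  unfolding phi_contract_def by (rule lin_ext_single[OF coeff_additive_scale])

lemma phi_contract_pm_scale: "phi_contract B (pm_scale c t) = sc c (phi_contract B t)"
  unfolding phi_contract_def by (rule lin_ext_scale_homog[OF coeff_additive_scale]) simp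

lemma bilinear_map_mult:
  "bilinear_map B \<Longrightarrow> bilinear_map (\<lambda>c d. B (a * c) (b * d))"
  unfolding bilinear_map_def by (simp add: distrib_left scale_mult_right[symmetric])

lemma bilinear_map_L: "bilinear_map B \<Longrightarrow> bilinear_map (\<lambda>a b. B a (L b))"
  using L_module_hom unfolding bilinear_map_def module_hom_iff by simp

lemma bilinear_map_phi_contract:
  "bilinear_map B \<Longrightarrow> bilinear_map (\<lambda>a b. phi_contract (\<lambda>c d. B (a * c) (b * d)) w)"
  unfolding bilinear_map_def phi_contract_def lin_ext_def
  by (simp add: distrib_right scale_mult_left[symmetric] scale_right_distrib sum.distrib
      scale_sum_right mult.commute)

text \<open>x in H and w in H_R (x) H_R are compatible if Delta x = (phi_L (x) phi_L) w, tested
  against all bilinear maps.\<close>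
definition compatible :: "'h \<Rightarrow> (forest \<times> forest \<Rightarrow>\<^sub>0 'k) \<Rightarrow> bool" where
  "compatible x w \<longleftrightarrow> (\<forall>B. bilinear_map B \<longrightarrow> contract B (\<Delta> x) = phi_contract B w)"

lemma compatible_one: "compatible 1 1"
  unfolding compatible_def
  using contract_teq[OF _ Delta_one]
  by (simp add: contract_single phi_contract_single flip: single_one)

lemma compatible_mult:
  assumes x: "compatible x u" and y: "compatible y w"
  shows "compatible (x * y) (u * w)"
  unfolding compatible_def
proof (intro allI impI)
  fix B assume B: "bilinear_map B"
  define C where "C = (\<lambda>a b. phi_contract (\<lambda>c d. B (a * c) (b * d)) w)"
  have y_shifted: "contract (\<lambda>c d. B (a * c) (b * d)) (\<Delta> y) = C a b" for a b
    using y bilinear_map_mult[OF B] by (simp add: compatible_def C_def)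
  have "contract B (\<Delta> (x * y)) = contract B (tmult (\<Delta> x) (\<Delta> y))"
    by (rule contract_teq[OF B Delta_mult])
  also have "\<dots> = (\<Sum>xs\<in>Poly_Mapping.keys (\<Delta> x). sc (Poly_Mapping.lookup (\<Delta> x) xs)
       (contract (\<lambda>c d. B (xs!0 * c) (xs!1 * d)) (\<Delta> y)))"
    by (simp add: contract_tmult contract_Delta scale_sum_right)
  also have "\<dots> = contract C (\<Delta> x)"
    unfolding y_shifted by (rule contract_Delta[symmetric])
  also have "\<dots> = phi_contract C u"
    using x bilinear_map_phi_contract[OF B] by (simp add: compatible_def C_def)
  also have "\<dots> = phi_contract B (u * w)"
    unfolding times_poly_mapping_expand phi_contract_sum phi_contract_single C_def
    by (simp add: phi_contract_def lin_ext_def scale_sum_right phiF_union)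
  finally show "contract B (\<Delta> (x * y)) = phi_contract B (u * w)" .
qed

lemma compatible_forestI:
  "\<forall>t\<in>#f. compatible (phiT L t) (DeltaT t) \<Longrightarrow>
     compatible (phiF L f) (prod_mset (image_mset DeltaT f))"
  by (induction f) (simp_all add: compatible_one compatible_mult phiF_add_mset)

text \<open>The cocycle property of L makes compatibility pass from a forest to its grafting.\<close>
lemma compatible_Node:
  assumes "compatible (phiF L ts) w"
  shows "compatible (phiT L (Node ts)) (Poly_Mapping.single ({#Node ts#}, {#}) 1 + id_tensor_Bplus w)"
  unfolding compatible_def
proof (intro allI impI)
  fix B assume B: "bilinear_map B"
  let ?x = "phiF L ts"
  have "contract B (\<Delta> (phiT L (Node ts))) = contract B (\<Delta> (L ?x))"
    by (simp add: phiF_def)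
  also have "\<dots> = contract (\<lambda>a b. B a (L b)) (\<Delta> ?x) + B (L ?x) 1"
    using contract_teq[OF B L_cocycle] by (simp add: contract_add contract_single contract_tapply_L)
  also have "\<dots> = phi_contract (\<lambda>a b. B a (L b)) w + B (L ?x) 1"
    using assms bilinear_map_L[OF B] by (simp add: compatible_def)
  also have "\<dots> = phi_contract B (Poly_Mapping.single ({#Node ts#}, {#}) 1 + id_tensor_Bplus w)"
    by (simp add: phi_contract_add phi_contract_single id_tensor_Bplus_def phi_contract_sum phiF_Node
        add.commute) (simp add: phi_contract_def lin_ext_def)
  finally show "contract B (\<Delta> (phiT L (Node ts))) = phi_contract B (Poly_Mapping.single ({#Node ts#}, {#}) 1 + id_tensor_Bplus w)" .
qed

lemma compatible_tree: "compatible (phiT L t) (DeltaT t)"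
proof (induction t)
  case (Node ts)
  then show ?case
    using compatible_Node[OF compatible_forestI] by simp
qed

lemma compatible_forest: "compatible (phiF L f) (prod_mset (image_mset DeltaT f))"
  by (simp add: compatible_forestI compatible_tree)

lemma phi_coalgebra:
  assumes \<phi>: "is_phi sc L \<phi>" and B: "bilinear_map B"
  shows "contract B (\<Delta> (\<phi> y)) = phi_contract B (DeltaR y)"
proof -
  interpret contract_\<Delta>: module_hom sc sc "\<lambda>x. contract B (\<Delta> x)"
    by (rule contract_Delta_module_hom[OF B])
  have "\<phi> y = (\<Sum>f\<in>Poly_Mapping.keys y. sc (Poly_Mapping.lookup y f) (phiF L f))"
    using is_phi_unique[OF \<phi>] by (simp add: phi_explicit_def lin_ext_def)
  then have "contract B (\<Delta> (\<phi> y)) =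
      (\<Sum>f\<in>Poly_Mapping.keys y. sc (Poly_Mapping.lookup y f) (contract B (\<Delta> (phiF L f))))"
    by (simp add: contract_\<Delta>.sum contract_\<Delta>.scale)
  also have "\<dots> = (\<Sum>f\<in>Poly_Mapping.keys y.
      sc (Poly_Mapping.lookup y f) (phi_contract B (prod_mset (image_mset DeltaT f))))"
    using compatible_forest B by (simp add: compatible_def)
  also have "\<dots> = phi_contract B (DeltaR y)"
    by (simp add: DeltaR_def phi_contract_sum phi_contract_pm_scale)
  finally show ?thesis .
qed

text \<open>Consequently phi_L intertwines delta (alpha o phi_L) on H_R with delta alpha on H:
  both are contractions of the respective coproducts with the bilinear map x, y |-> alpha(y) x.\<close>
lemma phi_delta_intertwine:
  assumes \<alpha>: "\<alpha> \<in> dual_space sc" and \<phi>: "is_phi sc L \<phi>"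
  shows "\<phi> (deltaR (\<alpha> \<circ> \<phi>) y) = delta_dual sc \<Delta> \<alpha> (\<phi> y)"
proof -
  interpret \<phi>: module_hom pm_scale sc \<phi>
    by (rule is_phi_module_hom[OF \<phi>])
  define B where "B = (\<lambda>x z. sc (\<alpha> z) x)"
  have B: "bilinear_map B"
    using \<alpha> by (simp add: bilinear_map_def dual_space_def B_def scale_left_distrib
        scale_right_distrib mult.commute)
  have \<phi>_single: "\<phi> (Poly_Mapping.single f c) = sc c (phiF L f)" for f c
    by (rule is_phi_single[OF \<phi>])
  have "\<phi> (\<Sum>ab\<in>Poly_Mapping.keys (DeltaR y). Poly_Mapping.single (fst ab)
          (Poly_Mapping.lookup (DeltaR y) ab * (\<alpha> \<circ> \<phi>) (Poly_Mapping.single (snd ab) 1)))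
      = phi_contract B (DeltaR y)"
    by (simp add: \<phi>.sum \<phi>_single phi_contract_def lin_ext_def B_def mult.commute)
  also have "\<dots> = contract B (\<Delta> (\<phi> y))"
    by (rule phi_coalgebra[OF \<phi> B, symmetric])
  also have "\<dots> = (\<Sum>xs\<in>Poly_Mapping.keys (\<Delta> (\<phi> y)).
      sc (Poly_Mapping.lookup (\<Delta> (\<phi> y)) xs * \<alpha> (xs ! 1)) (xs ! 0))"
    by (simp add: contract_Delta B_def mult.commute)
  finally show ?thesis
    by (simp add: deltaR_def delta_dual_def \<phi>.diff \<phi>_single)
qed

end

theorem mainTheorem14:
  fixes scale :: "'k::field_char_0 \<Rightarrow> 'h::comm_ring_1 \<Rightarrow> 'h"
    and \<Delta> :: "'h \<Rightarrow> ('h list \<Rightarrow>\<^sub>0 'k)"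
    and \<epsilon> :: "'h \<Rightarrow> 'k"
    and L :: "'h \<Rightarrow> 'h"
    and \<alpha> :: "'h \<Rightarrow> 'k"
  assumes "bialgebra scale \<Delta> \<epsilon>"
    and "L \<in> HZ1 scale \<Delta>"
    and "\<alpha> \<in> dual_space scale"
  shows "phiM scale (\<lambda>x. L x + delta_dual scale \<Delta> \<alpha> x)
           = phiM scale L \<circ> theta (\<alpha> \<circ> phiM scale L)"
proof -
  interpret cocycle_bialgebra scale \<Delta> \<epsilon> L
    using assms(1,2) by unfold_locales
  define \<phi> where "\<phi> = phiM scale L"
  define N where "N = (\<lambda>p. Bplus p + deltaR (\<alpha> \<circ> \<phi>) p)"
  have \<phi>: "is_phi scale L \<phi>"
    unfolding \<phi>_def by (rule is_phi_phiM[OF L_module_hom])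
  have "module_hom pm_scale pm_scale (deltaR (\<alpha> \<circ> \<phi>))"
    using assms(3) by (intro deltaR_module_hom) (simp_all add: dual_space_def is_phiD[OF \<phi>])
  then have "module_hom pm_scale pm_scale N"
    using Bplus_module_hom[where 'k = 'k] unfolding N_def module_hom_iff by (simp add: pm.scale_right_distrib)
  then have \<theta>: "is_phi pm_scale N (theta (\<alpha> \<circ> \<phi>))"
    unfolding theta_def N_def by (rule pm.is_phi_phiM)
  have "is_phi scale (\<lambda>x. L x + delta_dual scale \<Delta> \<alpha> x) (\<phi> \<circ> theta (\<alpha> \<circ> \<phi>))"
    by (rule is_phi_comp[OF \<theta> \<phi>])
      (simp add: N_def is_phiD[OF \<phi>] phi_delta_intertwine[OF assms(3) \<phi>])
  then show ?thesis
    unfolding \<phi>_def by (rule phiM_eqI)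
qed

end
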